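(* Let $n\ge3$ be odd, let $d,R\in\mathbb{Z}$ with $d\ne0$, $R$ not a square, $\gcd(d,R)=1$, and $D=d^2-R$. Suppose that for each prime divisor $p$ of $n$ there is a prime $q\ge3$ such that $v_q(D)$ is odd and $v_q(D)\not\equiv0\pmod p$. Then $f_n=f_n(Z,d,R)$ is irreducible in $\mathbb{Q}[Z]$.
   Context: $v_q$ denotes the $q$-adic valuation on $\mathbb{Q}\setminus\{0\}$. $f_n(Z,d,R)=\sum_{j=0}^{(n-1)/2}(-1)^j\frac{n}{n-j}\binom{n-j}{j}D^jZ^{n-2j}-2dD^{(n-1)/2}$, which equals $\sqrt D^{\,n}F_n(Z/\sqrt D)-2dD^{(n-1)/2}$ where $F_n(Z)=2T_n(Z/2)$ and $T_n$ is the Chebyshev polynomial of the first kind. *)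

theory Defs
  imports "HOL-Computational_Algebra.Computational_Algebra"
begin

definition fpoly :: "nat \<Rightarrow> int \<Rightarrow> int \<Rightarrow> rat poly" where
  "fpoly n d R =
     (let D = d^2 - R in
       (\<Sum>j\<in>{0..(n - 1) div 2}.
          monom ((-1)^j * (of_nat n / of_nat (n - j)) * of_nat ((n - j) choose j)
                 * (of_int D)^j) (n - 2*j))
       - [: of_int (2 * d * D ^ ((n - 1) div 2)) :])"

end

theory Submission
  imports Defs
begin

text \<open>Let q \<ge> 3 be a prime with e = v_q(D) odd, so q divides D but not 2d. The coefficient of
  Z^(n-2j) in f_n is an integer multiple of D^j, hence has valuation at least je, while the constant
  term -2dD^m, m = (n-1)/2, has valuation exactly me. So the Newton polygon of f_n at q is the single
  segment from (0, me) to (n, 0), and by Dumas' argument every monic factor g of f_n satisfies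
  n v_q(g(0)) = me deg g. Since n is prime to m, n divides e deg g; choosing q for each prime p | n
  with p \<nmid> e shows that n divides deg g.\<close>

lemma prime_multiplicity_mult_power:
  fixes q a b :: int
  assumes "prime q" "a \<noteq> 0" "b \<noteq> 0"
  shows "multiplicity q (a * b ^ k) = multiplicity q a + k * multiplicity q b"
  using assms prime_elem_multiplicity_mult_distrib[OF prime_imp_prime_elem[OF assms(1)]]
    prime_elem_multiplicity_power_distrib[OF prime_imp_prime_elem[OF assms(1)]] by simp

lemma multiplicity_add_ge_min:
  fixes q a b :: int
  assumes "prime q" and "a + b \<noteq> 0"
  shows "min (multiplicity q a) (multiplicity q b) \<le> multiplicity q (a + b)"
proof -
  define t where "t = min (multiplicity q a) (multiplicity q b)"
  have "q ^ t dvd a" "q ^ t dvd b"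
    unfolding t_def by (rule multiplicity_dvd'; simp)+
  then have "q ^ t dvd a + b" by simp
  then show ?thesis
    using multiplicity_geI[of "a + b" q t] assms not_prime_unit unfolding t_def by blast
qed

text \<open>Junk value: rat_valuation q 0 = 0.\<close>

definition rat_valuation :: "int \<Rightarrow> rat \<Rightarrow> int" where
  "rat_valuation q x =
     int (multiplicity q (fst (quotient_of x))) - int (multiplicity q (snd (quotient_of x)))"

lemma rat_valuation_fraction:
  fixes x :: rat
  assumes "x \<noteq> 0"
  obtains a b :: int where "x = of_int a / of_int b" "a \<noteq> 0" "b > 0"
    and "rat_valuation q x = int (multiplicity q a) - int (multiplicity q b)"
proof -
  obtain a b where ab: "quotient_of x = (a, b)" by (cases "quotient_of x")
  have "x = of_int a / of_int b" "b > 0"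
    using quotient_of_div[OF ab] quotient_of_denom_pos[OF ab] .
  with that assms show ?thesis unfolding rat_valuation_def ab by auto
qed

lemma rat_valuation_of_int_div:
  fixes q a b :: int
  assumes q: "prime q" and a: "a \<noteq> 0" and b: "b \<noteq> 0"
  shows "rat_valuation q (of_int a / of_int b) = int (multiplicity q a) - int (multiplicity q b)"
proof -
  obtain a' b' where ab': "quotient_of (of_int a / of_int b) = (a', b')"
    by (cases "quotient_of (of_int a / of_int b)")
  have "b' > 0" using quotient_of_denom_pos[OF ab'] .
  moreover have eq: "(of_int a / of_int b :: rat) = of_int a' / of_int b'"
    using quotient_of_div[OF ab'] .
  ultimately have "a' \<noteq> 0" using a b by auto
  have "(of_int (a' * b) :: rat) = of_int (a * b')"
    using eq b \<open>b' > 0\<close> by (simp add: field_simps)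
  then have "multiplicity q (a' * b) = multiplicity q (a * b')"
    by (simp only: of_int_eq_iff)
  then have "multiplicity q a' + multiplicity q b = multiplicity q a + multiplicity q b'"
    using a b \<open>a' \<noteq> 0\<close> \<open>b' > 0\<close>
    by (simp add: prime_elem_multiplicity_mult_distrib[OF prime_imp_prime_elem[OF q]])
  then show ?thesis unfolding rat_valuation_def ab' by simp
qed

lemma rat_valuation_of_int:
  "prime q \<Longrightarrow> a \<noteq> 0 \<Longrightarrow> rat_valuation q (of_int a) = int (multiplicity q a)"
  using rat_valuation_of_int_div[of q a 1] by simp

lemma rat_valuation_one [simp]: "prime q \<Longrightarrow> rat_valuation q 1 = 0"
  using rat_valuation_of_int[of q 1] by simp

lemma rat_valuation_mult:
  assumes q: "prime q" and "x \<noteq> 0" "y \<noteq> 0"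
  shows "rat_valuation q (x * y) = rat_valuation q x + rat_valuation q y"
proof -
  obtain a b where x: "x = of_int a / of_int b" "a \<noteq> 0" "b > 0"
    and vx: "rat_valuation q x = int (multiplicity q a) - int (multiplicity q b)"
    using rat_valuation_fraction[OF \<open>x \<noteq> 0\<close>] .
  obtain c d where y: "y = of_int c / of_int d" "c \<noteq> 0" "d > 0"
    and vy: "rat_valuation q y = int (multiplicity q c) - int (multiplicity q d)"
    using rat_valuation_fraction[OF \<open>y \<noteq> 0\<close>] .
  have "x * y = of_int (a * c) / of_int (b * d)" using x y by simp
  then have "rat_valuation q (x * y) = int (multiplicity q (a * c)) - int (multiplicity q (b * d))"
    using x y by (subst rat_valuation_of_int_div[OF q, symmetric]) simp_all
  then show ?thesis
    using x y vx vy by (simp add: prime_elem_multiplicity_mult_distrib[OF prime_imp_prime_elem[OF q]])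
qed

lemma rat_valuation_uminus: "prime q \<Longrightarrow> rat_valuation q (- x) = rat_valuation q x"
  using rat_valuation_mult[of q "-1" x] rat_valuation_of_int[of q "-1"]
  by (cases "x = 0") simp_all

lemma rat_valuation_add_ge_min:
  assumes q: "prime q" and "x \<noteq> 0" "y \<noteq> 0" and xy: "x + y \<noteq> 0"
  shows "min (rat_valuation q x) (rat_valuation q y) \<le> rat_valuation q (x + y)"
proof -
  obtain a b where x: "x = of_int a / of_int b" "a \<noteq> 0" "b > 0"
    and vx: "rat_valuation q x = int (multiplicity q a) - int (multiplicity q b)"
    using rat_valuation_fraction[OF \<open>x \<noteq> 0\<close>] .
  obtain c d where y: "y = of_int c / of_int d" "c \<noteq> 0" "d > 0"
    and vy: "rat_valuation q y = int (multiplicity q c) - int (multiplicity q d)"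
    using rat_valuation_fraction[OF \<open>y \<noteq> 0\<close>] .
  have sum: "x + y = of_int (a * d + c * b) / of_int (b * d)"
    using x y by (simp add: field_simps)
  with xy have "a * d + c * b \<noteq> 0" by (metis div_0 of_int_0)
  note mult_distrib = prime_elem_multiplicity_mult_distrib[OF prime_imp_prime_elem[OF q]]
  have "rat_valuation q (x + y) =
          int (multiplicity q (a * d + c * b)) - int (multiplicity q b) - int (multiplicity q d)"
    unfolding sum using x y \<open>a * d + c * b \<noteq> 0\<close>
    by (subst rat_valuation_of_int_div[OF q]) (simp_all add: mult_distrib)
  moreover have "min (multiplicity q (a * d)) (multiplicity q (c * b)) \<le> multiplicity q (a * d + c * b)"
    using multiplicity_add_ge_min[OF q \<open>a * d + c * b \<noteq> 0\<close>] .
  ultimately show ?thesis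
    using x y vx vy by (simp add: mult_distrib)
qed

lemma rat_valuation_add_less:
  assumes q: "prime q" and x: "x \<noteq> 0" and y: "y \<noteq> 0"
    and less: "rat_valuation q x < rat_valuation q y"
  shows "x + y \<noteq> 0" and "rat_valuation q (x + y) = rat_valuation q x"
proof -
  show xy: "x + y \<noteq> 0"
    using less rat_valuation_uminus[OF q, of x] by (auto simp: add_eq_0_iff)
  have "min (rat_valuation q x) (rat_valuation q y) \<le> rat_valuation q (x + y)"
    using rat_valuation_add_ge_min[OF q x y xy] .
  moreover have "min (rat_valuation q (x + y)) (rat_valuation q (- y)) \<le> rat_valuation q x"
    using rat_valuation_add_ge_min[OF q xy, of "- y"] x y by simp
  ultimately show "rat_valuation q (x + y) = rat_valuation q x"
    using less rat_valuation_uminus[OF q, of y] by linarith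
qed

lemma rat_valuation_sum_lower_bound:
  fixes q T :: int and \<phi> :: "int \<Rightarrow> int"
  assumes q: "prime q" and "mono \<phi>" and "finite A"
    and "\<And>a. a \<in> A \<Longrightarrow> f a \<noteq> 0 \<Longrightarrow> T \<le> \<phi> (rat_valuation q (f a))"
  shows "sum f A = 0 \<or> T \<le> \<phi> (rat_valuation q (sum f A))"
  using \<open>finite A\<close> assms(4)
proof (induction A rule: finite_induct)
  case (insert a A)
  then have IH: "sum f A = 0 \<or> T \<le> \<phi> (rat_valuation q (sum f A))" by blast
  consider "f a = 0" | "sum f A = 0" | "f a + sum f A = 0"
    | "f a \<noteq> 0" "sum f A \<noteq> 0" "f a + sum f A \<noteq> 0"
    by blast
  then show ?case
  proof cases
    case 4
    then have "min (rat_valuation q (f a)) (rat_valuation q (sum f A))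
                 \<le> rat_valuation q (f a + sum f A)"
      by (intro rat_valuation_add_ge_min[OF q])
    then have "\<phi> (min (rat_valuation q (f a)) (rat_valuation q (sum f A)))
                 \<le> \<phi> (rat_valuation q (f a + sum f A))"
      by (rule monoD[OF \<open>mono \<phi>\<close>])
    moreover have "T \<le> \<phi> (min (rat_valuation q (f a)) (rat_valuation q (sum f A)))"
      using IH insert.prems 4 by (simp add: min_def)
    ultimately show ?thesis using insert.hyps by simp
  qed (use insert IH in \<open>auto intro: insert.prems\<close>)
qed simp

text \<open>The Gauss valuation of a polynomial for which the indeterminate has valuation s/N, scaled by N:
  it measures the lowest line of slope -s/N on or below the Newton polygon.\<close>

definition coeff_weight :: "int \<Rightarrow> int \<Rightarrow> int \<Rightarrow> rat poly \<Rightarrow> nat \<Rightarrow> int" where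
  "coeff_weight q N s p i = N * rat_valuation q (coeff p i) + s * int i"

definition weighted_valuation :: "int \<Rightarrow> int \<Rightarrow> int \<Rightarrow> rat poly \<Rightarrow> int" where
  "weighted_valuation q N s p = Min (coeff_weight q N s p ` {i. coeff p i \<noteq> 0})"

definition first_minimal_index :: "int \<Rightarrow> int \<Rightarrow> int \<Rightarrow> rat poly \<Rightarrow> nat" where
  "first_minimal_index q N s p =
     (LEAST i. coeff p i \<noteq> 0 \<and> coeff_weight q N s p i = weighted_valuation q N s p)"

lemma finite_nonzero_coeffs: "finite {i. coeff p i \<noteq> 0}"
  by (rule finite_subset[of _ "{..degree p}"]) (auto intro: le_degree)

lemma weighted_valuation_le:
  "coeff p i \<noteq> 0 \<Longrightarrow> weighted_valuation q N s p \<le> coeff_weight q N s p i"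
  unfolding weighted_valuation_def by (rule Min_le) (simp_all add: finite_nonzero_coeffs)

lemma weighted_valuation_attained:
  assumes "p \<noteq> 0"
  shows "\<exists>i. coeff p i \<noteq> 0 \<and> coeff_weight q N s p i = weighted_valuation q N s p"
proof -
  have "coeff p (degree p) \<noteq> 0" using assms by simp
  then have "weighted_valuation q N s p \<in> coeff_weight q N s p ` {i. coeff p i \<noteq> 0}"
    unfolding weighted_valuation_def by (intro Min_in finite_imageI finite_nonzero_coeffs) blast
  then show ?thesis by auto
qed

lemma first_minimal_index:
  assumes "p \<noteq> 0"
  shows "coeff p (first_minimal_index q N s p) \<noteq> 0"
    and "coeff_weight q N s p (first_minimal_index q N s p) = weighted_valuation q N s p"
  using LeastI_ex[OF weighted_valuation_attained[OF assms]]
  unfolding first_minimal_index_def by blast+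

lemma less_first_minimal_index:
  assumes "j < first_minimal_index q N s p" and "coeff p j \<noteq> 0"
  shows "weighted_valuation q N s p < coeff_weight q N s p j"
  using not_less_Least[OF assms(1)[unfolded first_minimal_index_def]] assms(2)
    weighted_valuation_le[OF assms(2), where q = q and N = N and s = s] by fastforce

lemma coeff_weight_mult_term:
  assumes "prime q" and "coeff p i \<noteq> 0" and "coeff r j \<noteq> 0"
  shows "N * rat_valuation q (coeff p i * coeff r j) + s * int (i + j)
           = coeff_weight q N s p i + coeff_weight q N s r j"
  using rat_valuation_mult[OF assms] unfolding coeff_weight_def by (simp add: algebra_simps)

lemma coeff_mult_sum_lower_bound:
  fixes p r :: "rat poly"
  assumes q: "prime q" and N: "N > 0"
    and bound: "\<And>i. i \<in> I \<Longrightarrow> coeff p i \<noteq> 0 \<Longrightarrow> coeff r (m - i) \<noteq> 0 \<Longrightarrow>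
                  T \<le> coeff_weight q N s p i + coeff_weight q N s r (m - i)"
    and I: "I \<subseteq> {..m}"
  shows "(\<Sum>i\<in>I. coeff p i * coeff r (m - i)) = 0 \<or>
           T \<le> N * rat_valuation q (\<Sum>i\<in>I. coeff p i * coeff r (m - i)) + s * int m"
proof (rule rat_valuation_sum_lower_bound[OF q])
  show "mono (\<lambda>v. N * v + s * int m)" using N by (intro monoI) simp
  show "finite I" using I finite_subset by blast
next
  fix i assume "i \<in> I" and nz: "coeff p i * coeff r (m - i) \<noteq> 0"
  then have "i + (m - i) = m" using I by auto
  then show "T \<le> N * rat_valuation q (coeff p i * coeff r (m - i)) + s * int m"
    using coeff_weight_mult_term[OF q, of p i r "m - i" N s] bound[OF \<open>i \<in> I\<close>] nz by simp
qed

lemma weighted_valuation_le_coeff_mult: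
  assumes q: "prime q" and N: "N > 0" and nz: "coeff (p * r) m \<noteq> 0"
  shows "weighted_valuation q N s p + weighted_valuation q N s r \<le> coeff_weight q N s (p * r) m"
proof -
  have "coeff (p * r) m = 0 \<or>
          weighted_valuation q N s p + weighted_valuation q N s r
            \<le> N * rat_valuation q (coeff (p * r) m) + s * int m"
    unfolding coeff_mult
    by (rule coeff_mult_sum_lower_bound[OF q N _ order.refl])
      (intro add_mono weighted_valuation_le)
  then show ?thesis using nz unfolding coeff_weight_def by simp
qed

lemma weighted_valuation_less_off_first_minimal_indices:
  fixes q N s :: int and p r :: "rat poly"
  defines "i \<equiv> first_minimal_index q N s p" and "j \<equiv> first_minimal_index q N s r"
  assumes "k \<le> i + j" "k \<noteq> i" and "coeff p k \<noteq> 0" "coeff r (i + j - k) \<noteq> 0"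
  shows "weighted_valuation q N s p + weighted_valuation q N s r
           < coeff_weight q N s p k + coeff_weight q N s r (i + j - k)"
proof -
  have "weighted_valuation q N s p \<le> coeff_weight q N s p k"
    "weighted_valuation q N s r \<le> coeff_weight q N s r (i + j - k)"
    using assms by (simp_all add: weighted_valuation_le)
  moreover have "k < i \<or> i + j - k < j" using assms by auto
  then have "weighted_valuation q N s p < coeff_weight q N s p k \<or>
             weighted_valuation q N s r < coeff_weight q N s r (i + j - k)"
    using less_first_minimal_index assms unfolding i_def j_def by blast
  ultimately show ?thesis by linarith
qed

lemma coeff_mult_first_minimal_indices:
  fixes q N s :: int and p r :: "rat poly"
  assumes q: "prime q" and N: "N > 0" and "p \<noteq> 0" "r \<noteq> 0"
  defines "i \<equiv> first_minimal_index q N s p" and "j \<equiv> first_minimal_index q N s r"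
  shows "coeff (p * r) (i + j) \<noteq> 0"
    and "coeff_weight q N s (p * r) (i + j) = weighted_valuation q N s p + weighted_valuation q N s r"
proof -
  define F where "F k = coeff p k * coeff r (i + j - k)" for k
  define rest where "rest = (\<Sum>k\<in>{..i + j} - {i}. F k)"
  have split: "coeff (p * r) (i + j) = F i + rest"
    unfolding coeff_mult F_def rest_def by (rule sum.remove) simp_all
  have p_i: "coeff p i \<noteq> 0" "coeff_weight q N s p i = weighted_valuation q N s p"
    and r_j: "coeff r j \<noteq> 0" "coeff_weight q N s r j = weighted_valuation q N s r"
    using first_minimal_index \<open>p \<noteq> 0\<close> \<open>r \<noteq> 0\<close> unfolding i_def j_def by blast+
  then have F_i: "F i \<noteq> 0" "N * rat_valuation q (F i) + s * int (i + j)
                                  = weighted_valuation q N s p + weighted_valuation q N s r"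
    using coeff_weight_mult_term[OF q p_i(1) r_j(1), of N s] by (simp_all add: F_def)
  have "rest = 0 \<or> weighted_valuation q N s p + weighted_valuation q N s r + 1
                     \<le> N * rat_valuation q rest + s * int (i + j)"
    unfolding rest_def F_def
    using weighted_valuation_less_off_first_minimal_indices[of _ q N s p r] unfolding i_def j_def
    by (intro coeff_mult_sum_lower_bound[OF q N _ Diff_subset]) fastforce
  then have "rest = 0 \<or> N * rat_valuation q (F i) < N * rat_valuation q rest"
    using F_i(2) by linarith
  then consider "rest = 0" | "rest \<noteq> 0" "rat_valuation q (F i) < rat_valuation q rest"
    using N by (auto simp: mult_less_cancel_left_pos)
  then have "coeff (p * r) (i + j) \<noteq> 0 \<and>
               rat_valuation q (coeff (p * r) (i + j)) = rat_valuation q (F i)"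
    by cases (use split F_i(1) rat_valuation_add_less[OF q F_i(1)] in simp_all)
  then show "coeff (p * r) (i + j) \<noteq> 0"
    and "coeff_weight q N s (p * r) (i + j) = weighted_valuation q N s p + weighted_valuation q N s r"
    using F_i(2) unfolding coeff_weight_def by simp_all
qed

lemma weighted_valuation_mult:
  assumes q: "prime q" and N: "N > 0" and "p \<noteq> 0" "r \<noteq> 0"
  shows "weighted_valuation q N s (p * r) = weighted_valuation q N s p + weighted_valuation q N s r"
proof (rule antisym)
  show "weighted_valuation q N s (p * r) \<le> weighted_valuation q N s p + weighted_valuation q N s r"
    using coeff_mult_first_minimal_indices[OF assms] weighted_valuation_le by metis
  have "p * r \<noteq> 0" using assms by simp
  then show "weighted_valuation q N s p + weighted_valuation q N s r \<le> weighted_valuation q N s (p * r)"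
    using first_minimal_index weighted_valuation_le_coeff_mult[OF q N] by metis
qed

lemma weighted_valuation_eq_coeff_weight:
  assumes "coeff p k \<noteq> 0"
    and "\<And>i. coeff p i \<noteq> 0 \<Longrightarrow> coeff_weight q N s p k \<le> coeff_weight q N s p i"
  shows "weighted_valuation q N s p = coeff_weight q N s p k"
proof (rule antisym)
  show "weighted_valuation q N s p \<le> coeff_weight q N s p k"
    using weighted_valuation_le[OF assms(1)] .
  have "p \<noteq> 0" using assms(1) by auto
  then show "coeff_weight q N s p k \<le> weighted_valuation q N s p"
    using weighted_valuation_attained assms(2) by metis
qed

text \<open>Dumas' theorem for a Newton polygon consisting of the single segment from (0, t) to (deg f, 0).\<close>

lemma newton_polygon_single_segment_factor:
  fixes f g h :: "rat poly" and q t :: int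
  assumes q: "prime q" and fgh: "f = g * h" and g: "lead_coeff g = 1" and h: "lead_coeff h = 1"
    and f0: "coeff f 0 \<noteq> 0" and t: "rat_valuation q (coeff f 0) = t"
    and above: "\<And>i. coeff f i \<noteq> 0 \<Longrightarrow>
                  t * (int (degree f) - int i) \<le> int (degree f) * rat_valuation q (coeff f i)"
  shows "int (degree f) * rat_valuation q (coeff g 0) = t * int (degree g)"
proof -
  have "g \<noteq> 0" "h \<noteq> 0" using g h by auto
  then have deg: "degree f = degree g + degree h" using fgh by (simp add: degree_mult_eq)
  define N where "N = int (degree f)"
  show ?thesis
  proof (cases "N = 0")
    case True
    then show ?thesis using deg by (simp add: N_def)
  next
    case False
    then have N: "N > 0" by (simp add: N_def)
    have "weighted_valuation q N t f = N * t"
      using weighted_valuation_eq_coeff_weight[OF f0] above t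
      by (simp add: coeff_weight_def N_def algebra_simps)
    moreover have "weighted_valuation q N t f = weighted_valuation q N t g + weighted_valuation q N t h"
      using weighted_valuation_mult[OF q N \<open>g \<noteq> 0\<close> \<open>h \<noteq> 0\<close>] fgh by simp
    moreover have "weighted_valuation q N t g \<le> t * int (degree g)"
      "weighted_valuation q N t h \<le> t * int (degree h)"
      using weighted_valuation_le[of g "degree g" q N t] weighted_valuation_le[of h "degree h" q N t]
        g h q by (simp_all add: coeff_weight_def)
    moreover have "coeff g 0 \<noteq> 0" "coeff h 0 \<noteq> 0" using f0 fgh by (auto simp: coeff_mult_0)
    then have "weighted_valuation q N t g \<le> N * rat_valuation q (coeff g 0)"
      "weighted_valuation q N t h \<le> N * rat_valuation q (coeff h 0)"
      using weighted_valuation_le[of g 0 q N t] weighted_valuation_le[of h 0 q N t]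
      by (simp_all add: coeff_weight_def)
    moreover have "N * t = N * rat_valuation q (coeff g 0) + N * rat_valuation q (coeff h 0)"
      using rat_valuation_mult[OF q \<open>coeff g 0 \<noteq> 0\<close> \<open>coeff h 0 \<noteq> 0\<close>] t fgh
      by (simp add: coeff_mult_0 flip: distrib_left)
    moreover have "t * N = t * int (degree g) + t * int (degree h)"
      using deg by (simp add: N_def algebra_simps)
    ultimately show ?thesis unfolding N_def[symmetric] by (simp add: mult.commute)
  qed
qed

definition fpoly_term_coeff :: "nat \<Rightarrow> int \<Rightarrow> int \<Rightarrow> nat \<Rightarrow> rat" where
  "fpoly_term_coeff n d R j =
     (-1) ^ j * (of_nat n / of_nat (n - j)) * of_nat ((n - j) choose j) * of_int (d\<^sup>2 - R) ^ j"

lemma coeff_fpoly: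
  "coeff (fpoly n d R) i =
     (\<Sum>j\<in>{0..(n - 1) div 2}. if n - 2 * j = i then fpoly_term_coeff n d R j else 0)
     - (if i = 0 then of_int (2 * d * (d\<^sup>2 - R) ^ ((n - 1) div 2)) else 0)"
  unfolding fpoly_def Let_def coeff_diff coeff_sum coeff_monom fpoly_term_coeff_def
  by (cases i) simp_all

lemma mult_binomial_diff_eq:
  assumes "0 < j" "j \<le> n"
  shows "n * ((n - j) choose j) = (n - j) * (((n - j) choose j) + ((n - j - 1) choose (j - 1)))"
proof -
  have "n * ((n - j) choose j) = (n - j) * ((n - j) choose j) + j * ((n - j) choose j)"
    using assms(2) by (metis add_mult_distrib le_add_diff_inverse2)
  also have "j * ((n - j) choose j) = (n - j) * ((n - j - 1) choose (j - 1))"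
    using times_binomial_minus1_eq[OF assms(1)] .
  also have "(n - j) * ((n - j) choose j) + (n - j) * ((n - j - 1) choose (j - 1))
               = (n - j) * (((n - j) choose j) + ((n - j - 1) choose (j - 1)))"
    by (rule add_mult_distrib2[symmetric])
  finally show ?thesis .
qed

lemma fpoly_term_coeff_integral:
  assumes "0 < n" "j \<le> (n - 1) div 2"
  obtains z :: int where "fpoly_term_coeff n d R j = of_int (z * (d\<^sup>2 - R) ^ j)"
proof -
  have "\<exists>c::int. of_nat n / of_nat (n - j) * of_nat ((n - j) choose j) = (of_int c :: rat)"
  proof (cases "j = 0")
    case True
    then show ?thesis using assms(1) by (intro exI[of _ 1]) simp
  next
    case False
    have "j < n" using assms by linarith
    then have "(of_nat n :: rat) * of_nat ((n - j) choose j)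
                 = of_nat (n - j) * of_nat (((n - j) choose j) + ((n - j - 1) choose (j - 1)))"
      using mult_binomial_diff_eq[of j n] False by (metis less_imp_le not_gr0 of_nat_mult)
    then have "of_nat n / of_nat (n - j) * of_nat ((n - j) choose j)
                 = (of_nat (((n - j) choose j) + ((n - j - 1) choose (j - 1))) :: rat)"
      using \<open>j < n\<close> by (simp add: field_simps)
    then show ?thesis by (metis of_int_of_nat_eq)
  qed
  then obtain c :: int
    where c: "of_nat n / of_nat (n - j) * of_nat ((n - j) choose j) = (of_int c :: rat)" ..
  have "fpoly_term_coeff n d R j
          = (-1) ^ j * (of_nat n / of_nat (n - j) * of_nat ((n - j) choose j)) * of_int (d\<^sup>2 - R) ^ j"
    unfolding fpoly_term_coeff_def by (simp only: mult.assoc)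
  then have "fpoly_term_coeff n d R j = of_int ((-1) ^ j * c * (d\<^sup>2 - R) ^ j)" unfolding c by simp
  then show ?thesis using that by blast
qed

lemma fpoly_term_coeff_valuation:
  fixes q :: int
  assumes q: "prime q" and "d\<^sup>2 - R \<noteq> 0" "0 < n" "j \<le> (n - 1) div 2"
    and nz: "fpoly_term_coeff n d R j \<noteq> 0"
  shows "int j * int (multiplicity q (d\<^sup>2 - R)) \<le> rat_valuation q (fpoly_term_coeff n d R j)"
proof -
  obtain z where z: "fpoly_term_coeff n d R j = of_int (z * (d\<^sup>2 - R) ^ j)"
    using fpoly_term_coeff_integral assms(3,4) .
  with nz have "z \<noteq> 0" by auto
  then show ?thesis unfolding z using assms
    by (subst rat_valuation_of_int[OF q]) (simp_all add: prime_multiplicity_mult_power[OF q])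
qed

lemma coeff_fpoly_degree:
  assumes "0 < n"
  shows "coeff (fpoly n d R) n = 1"
proof -
  have "coeff (fpoly n d R) n
          = (\<Sum>j\<in>{0..(n - 1) div 2}. if n - 2 * j = n then fpoly_term_coeff n d R j else 0)"
    unfolding coeff_fpoly using assms by simp
  also have "\<dots> = (\<Sum>j\<in>{0..(n - 1) div 2}. if j = 0 then fpoly_term_coeff n d R j else 0)"
    by (rule sum.cong) (use assms in auto)
  also have "\<dots> = 1" using assms by (simp add: fpoly_term_coeff_def)
  finally show ?thesis .
qed

lemma coeff_fpoly_gt_degree: "n < i \<Longrightarrow> coeff (fpoly n d R) i = 0"
  unfolding coeff_fpoly by (subst sum.neutral) auto

lemma degree_fpoly: "0 < n \<Longrightarrow> degree (fpoly n d R) = n"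
  using coeff_fpoly_degree coeff_fpoly_gt_degree
  by (metis (no_types) le_degree degree_le antisym one_neq_zero)

lemma lead_coeff_fpoly: "0 < n \<Longrightarrow> lead_coeff (fpoly n d R) = 1"
  by (simp add: degree_fpoly coeff_fpoly_degree)

lemma coeff_0_fpoly:
  "0 < n \<Longrightarrow> coeff (fpoly n d R) 0 = - of_int (2 * d * (d\<^sup>2 - R) ^ ((n - 1) div 2))"
  unfolding coeff_fpoly by (subst sum.neutral) auto

lemma fpoly_coeff_valuation:
  fixes q :: int
  assumes q: "prime q" and D: "d\<^sup>2 - R \<noteq> 0" and i: "0 < i"
    and nz: "coeff (fpoly n d R) i \<noteq> 0"
  shows "int (n - i) * int (multiplicity q (d\<^sup>2 - R)) \<le> 2 * rat_valuation q (coeff (fpoly n d R) i)"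
proof -
  have "coeff (fpoly n d R) i
          = (\<Sum>j\<in>{0..(n - 1) div 2}. if n - 2 * j = i then fpoly_term_coeff n d R j else 0)"
    (is "_ = ?S") unfolding coeff_fpoly using i by simp
  moreover have "?S = 0 \<or> int (n - i) * int (multiplicity q (d\<^sup>2 - R)) \<le> 2 * rat_valuation q ?S"
  proof (rule rat_valuation_sum_lower_bound[OF q])
    show "mono (\<lambda>v::int. 2 * v)" by (intro monoI) simp
    fix j assume j: "j \<in> {0..(n - 1) div 2}"
      and "(if n - 2 * j = i then fpoly_term_coeff n d R j else 0) \<noteq> 0"
    then have ij: "n - 2 * j = i" and "fpoly_term_coeff n d R j \<noteq> 0" by (auto split: if_splits)
    moreover have "0 < n" using ij i by simp
    ultimately show "int (n - i) * int (multiplicity q (d\<^sup>2 - R))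
                       \<le> 2 * rat_valuation q (if n - 2 * j = i then fpoly_term_coeff n d R j else 0)"
      using fpoly_term_coeff_valuation[OF q D, of n j] j i by force
  qed simp
  ultimately show ?thesis using nz by simp
qed

lemma fpoly_constant_valuation:
  fixes q :: int
  assumes q: "prime q" and "\<not> q dvd 2 * d" and "d\<^sup>2 - R \<noteq> 0" and "0 < n"
  shows "coeff (fpoly n d R) 0 \<noteq> 0"
    and "rat_valuation q (coeff (fpoly n d R) 0)
           = int ((n - 1) div 2) * int (multiplicity q (d\<^sup>2 - R))"
proof -
  have "2 * d * (d\<^sup>2 - R) ^ ((n - 1) div 2) \<noteq> 0" using assms by auto
  then show "coeff (fpoly n d R) 0 \<noteq> 0" using coeff_0_fpoly[OF \<open>0 < n\<close>] by simp
  moreover have "multiplicity q (2 * d) = 0" using assms(2) by (simp add: not_dvd_imp_multiplicity_0)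
  ultimately show "rat_valuation q (coeff (fpoly n d R) 0)
               = int ((n - 1) div 2) * int (multiplicity q (d\<^sup>2 - R))"
    unfolding coeff_0_fpoly[OF \<open>0 < n\<close>] rat_valuation_uminus[OF q] using assms
    by (simp only: rat_valuation_of_int[OF q]) (simp add: prime_multiplicity_mult_power[OF q])
qed

lemma fpoly_monic_factor_degree:
  fixes q :: int and g h :: "rat poly"
  assumes odd: "odd n" and q: "prime q" and qd: "\<not> q dvd 2 * d" and D: "d\<^sup>2 - R \<noteq> 0"
    and fgh: "fpoly n d R = g * h" and g: "lead_coeff g = 1" and h: "lead_coeff h = 1"
  shows "n dvd multiplicity q (d\<^sup>2 - R) * degree g"
proof -
  define m where "m = (n - 1) div 2"
  define e where "e = multiplicity q (d\<^sup>2 - R)"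
  have n: "n = 2 * m + 1" "0 < n" using odd unfolding m_def by presburger+
  \<comment> \<open>v(a_i) \<ge> e (n - i) / 2 \<ge> m e (n - i) / n, as n = 2m + 1 > 2m\<close>
  have above: "int (m * e) * (int n - int i) \<le> int n * rat_valuation q (coeff (fpoly n d R) i)"
    if nz: "coeff (fpoly n d R) i \<noteq> 0" for i
  proof (cases "i = 0")
    case True
    then show ?thesis using fpoly_constant_valuation(2)[OF q qd D \<open>0 < n\<close>]
      unfolding m_def e_def by simp
  next
    case False
    define V where "V = rat_valuation q (coeff (fpoly n d R) i)"
    define A where "A = int (n - i) * int e"
    have "i \<le> n" using nz coeff_fpoly_gt_degree by (metis not_le)
    then have goal: "int (m * e) * (int n - int i) = int m * A" by (simp add: A_def)
    have "A \<le> 2 * V" "0 \<le> A"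
      using fpoly_coeff_valuation[OF q D _ nz] False unfolding A_def V_def e_def by simp_all
    then have "int n * A \<le> int n * (2 * V)" by (intro mult_left_mono) simp_all
    then have "int n * A \<le> 2 * (int n * V)" by (simp add: algebra_simps)
    moreover have "int n * A = 2 * (int m * A) + A" using n by (simp add: algebra_simps)
    ultimately show ?thesis using \<open>0 \<le> A\<close> unfolding goal V_def by linarith
  qed
  have "int (degree (fpoly n d R)) * rat_valuation q (coeff g 0) = int (m * e) * int (degree g)"
    using newton_polygon_single_segment_factor[OF q fgh g h] fpoly_constant_valuation[OF q qd D \<open>0 < n\<close>]
      above degree_fpoly[OF \<open>0 < n\<close>] unfolding m_def e_def by simp
  then have "int n dvd int (m * (e * degree g))" using degree_fpoly[OF \<open>0 < n\<close>]
    by (metis dvd_triv_left mult.assoc of_nat_mult)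
  then have "n dvd m * (e * degree g)" by (simp only: int_dvd_int_iff)
  moreover have "coprime n m"
    using n gcd_add_mult[of m 2 1] by (simp add: coprime_iff_gcd_eq_1 gcd.commute)
  ultimately show ?thesis unfolding e_def by (simp add: coprime_dvd_mult_right_iff)
qed

lemma irreducible_monic_polyI:
  fixes f :: "'a::field poly"
  assumes f: "lead_coeff f = 1" and "0 < degree f"
    and factors: "\<And>g h. f = g * h \<Longrightarrow> lead_coeff g = 1 \<Longrightarrow> lead_coeff h = 1 \<Longrightarrow>
                    degree g = 0 \<or> degree h = 0"
  shows "irreducible f"
proof (rule irreducibleI)
  show "f \<noteq> 0" using f by auto
  then show "\<not> is_unit f" using \<open>0 < degree f\<close> by (simp add: is_unit_iff_degree)
  fix a b assume ab: "f = a * b"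
  then have "a \<noteq> 0" "b \<noteq> 0" using \<open>f \<noteq> 0\<close> by auto
  define c where "c = lead_coeff a"
  have "c \<noteq> 0" using \<open>a \<noteq> 0\<close> by (simp add: c_def)
  have "f = smult (inverse c) a * smult c b" using ab \<open>c \<noteq> 0\<close> by simp
  moreover have "lead_coeff (smult (inverse c) a) = 1" using \<open>c \<noteq> 0\<close> by (simp add: c_def)
  moreover have "lead_coeff (smult c b) = 1"
    using ab f \<open>a \<noteq> 0\<close> by (simp add: c_def lead_coeff_mult)
  ultimately have "degree a = 0 \<or> degree b = 0" using factors \<open>c \<noteq> 0\<close> by fastforce
  then show "is_unit a \<or> is_unit b"
    using \<open>a \<noteq> 0\<close> \<open>b \<noteq> 0\<close> by (auto simp: is_unit_iff_degree)
qed

lemma prime_dvd_diff_square_not_dvd_double: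
  fixes q d R :: int
  assumes "prime q" "3 \<le> q" "q dvd d\<^sup>2 - R" "gcd d R = 1"
  shows "\<not> q dvd 2 * d"
proof
  assume "q dvd 2 * d"
  moreover have "\<not> q dvd 2" using assms(2) by (auto dest: zdvd_imp_le)
  ultimately have "q dvd d" using assms(1) by (simp add: prime_dvd_mult_iff)
  then have "q dvd d\<^sup>2" by (simp add: power2_eq_square)
  then have "q dvd d\<^sup>2 - (d\<^sup>2 - R)" using assms(3) by (rule dvd_diff)
  then have "q dvd R" by simp
  then have "q dvd gcd d R" using \<open>q dvd d\<close> by simp
  then show False using assms(1,4) not_prime_unit by auto
qed

lemma multiplicity_le_of_dvd_mult:
  fixes p n e k :: nat
  assumes "prime p" "n dvd e * k" "\<not> p dvd e" "k \<noteq> 0"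
  shows "multiplicity p n \<le> multiplicity p k"
proof -
  have "e \<noteq> 0" using assms(3) by (metis dvd_0_right)
  then have "multiplicity p n \<le> multiplicity p (e * k)"
    using assms by (intro dvd_imp_multiplicity_le) auto
  also have "\<dots> = multiplicity p k"
    using assms \<open>e \<noteq> 0\<close> by (simp add: prime_elem_multiplicity_mult_distrib not_dvd_imp_multiplicity_0)
  finally show ?thesis .
qed

theorem proposition7:
  fixes n :: nat and d R :: int
  assumes "n \<ge> 3" and "odd n"
    and "d \<noteq> 0"
    and "\<not> (\<exists>k::int. R = k^2)"
    and "gcd d R = 1"
    and "\<And>p. prime p \<Longrightarrow> p dvd n \<Longrightarrow>
           \<exists>q::int. prime q \<and> q \<ge> 3 \<and> odd (multiplicity q (d^2 - R))
                  \<and> \<not> (int p dvd int (multiplicity q (d^2 - R)))"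
  shows "irreducible (fpoly n d R)"
proof (rule irreducible_monic_polyI)
  show "lead_coeff (fpoly n d R) = 1" "0 < degree (fpoly n d R)"
    using assms(1) lead_coeff_fpoly degree_fpoly by simp_all
  have D: "d\<^sup>2 - R \<noteq> 0" using assms(4) by auto
  fix g h assume fgh: "fpoly n d R = g * h" and monic: "lead_coeff g = 1" "lead_coeff h = 1"
  have "g \<noteq> 0" "h \<noteq> 0" using monic by auto
  then have deg: "degree g + degree h = n"
    using degree_fpoly[of n d R] assms(1) by (simp add: fgh degree_mult_eq)
  have "n dvd degree g" if "degree g \<noteq> 0"
  proof (rule multiplicity_le_imp_dvd)
    fix p :: nat assume p: "prime p"
    show "multiplicity p n \<le> multiplicity p (degree g)"
    proof (cases "p dvd n")
      case True
      then obtain q :: int where q: "prime q" "q \<ge> 3" "odd (multiplicity q (d\<^sup>2 - R))"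
        "\<not> p dvd multiplicity q (d\<^sup>2 - R)" using assms(6)[OF p] by (auto simp: int_dvd_int_iff)
      then have "q dvd d\<^sup>2 - R" by (metis even_zero not_dvd_imp_multiplicity_0)
      then have "\<not> q dvd 2 * d" by (rule prime_dvd_diff_square_not_dvd_double[OF q(1,2) _ assms(5)])
      from fpoly_monic_factor_degree[OF assms(2) q(1) this D fgh monic]
      show ?thesis using multiplicity_le_of_dvd_mult p q(4) that by blast
    qed (simp add: not_dvd_imp_multiplicity_0)
  qed (use assms(1) in simp)
  then show "degree g = 0 \<or> degree h = 0"
    using deg dvd_imp_le[of n "degree g"] by linarith
qed

end
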